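(* Let $V$ be a quasi-regular mixed lattice vector space, let $A$ be a quasi-ideal and $B$ a positively generated $(\le)$-order convex subspace of $V$. Then $A+B$ is a mixed-order convex subspace. Moreover, if $B$ is an ideal then $A+B$ is a quasi-ideal, and if in addition $A$ is regular then $(A+B)_p=A_p+B_p$.
   Context: A mixed lattice vector space is a real vector space $V$ with two partial orderings $\le$ (initial) and $\preceq$ (specific), each compatible with the vector space structure, such that for all $x,y$ the mixed lower envelope $x\curlywedge y=\max\{w: w\preceq x,\ w\le y\}$ and mixed upper envelope $x\curlyvee y=\min\{w: x\preceq w,\ y\le w\}$ exist (max/min with respect to $\le$). $V_p=\{x:0\le x\}$, $V_{sp}=\{x:0\preceq x\}$, $E_p=E\cap V_p$, $E_{sp}=E\cap V_{sp}$. $V$ is quasi-regular if $V_{sp}$ is closed under $\curlywedge,\curlyvee$. A mixed lattice subspace is a linear subspace closed under $\curlywedge,\curlyvee$. A subspace $S$ is regular if $S=S_{sp}-S_{sp}$ and positively generated if $S=S_p-S_p$. A subset $U$ is $(\le)$-order convex if $x\le z\le y$ with $x,y\in U$ implies $z\in U$. A subspace $A$ is mixed-order convex if $y\in A$ and $0\preceq x\le y$ imply $x\in A$. An ideal is a $(\le)$-order convex mixed lattice subspace; a quasi-ideal is a mixed-order convex mixed lattice subspace. *)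

theory Defs
  imports Complex_Main
begin

text \<open>A mixed lattice vector space: a real vector space with two partial orders,
  the initial order le (written \<le> in the paper) and the specific order sle
  (written \<preceq> in the paper), both compatible with the vector space
  structure, such that the mixed lower and upper envelopes exist.\<close>

definition partial_order_rel :: "('a \<Rightarrow> 'a \<Rightarrow> bool) \<Rightarrow> bool" where
  "partial_order_rel r \<longleftrightarrow>
     (\<forall>x. r x x) \<and> (\<forall>x y z. r x y \<longrightarrow> r y z \<longrightarrow> r x z) \<and>
     (\<forall>x y. r x y \<longrightarrow> r y x \<longrightarrow> x = y)"

definition vs_compatible :: "('a::real_vector \<Rightarrow> 'a \<Rightarrow> bool) \<Rightarrow> bool" where
  "vs_compatible r \<longleftrightarrow>
     (\<forall>x y z. r x y \<longrightarrow> r (x + z) (y + z)) \<and>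
     (\<forall>x y (c::real). r x y \<longrightarrow> 0 \<le> c \<longrightarrow> r (c *\<^sub>R x) (c *\<^sub>R y))"

definition is_greatest_wrt :: "('a \<Rightarrow> 'a \<Rightarrow> bool) \<Rightarrow> 'a set \<Rightarrow> 'a \<Rightarrow> bool" where
  "is_greatest_wrt r S m \<longleftrightarrow> m \<in> S \<and> (\<forall>w\<in>S. r w m)"

definition is_least_wrt :: "('a \<Rightarrow> 'a \<Rightarrow> bool) \<Rightarrow> 'a set \<Rightarrow> 'a \<Rightarrow> bool" where
  "is_least_wrt r S m \<longleftrightarrow> m \<in> S \<and> (\<forall>w\<in>S. r m w)"

text \<open>mixed lower envelope  x \<curlywedge> y = max wrt le {w. w \<preceq> x, w \<le> y}\<close>
definition mlow :: "('a \<Rightarrow> 'a \<Rightarrow> bool) \<Rightarrow> ('a \<Rightarrow> 'a \<Rightarrow> bool) \<Rightarrow> 'a \<Rightarrow> 'a \<Rightarrow> 'a" where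
  "mlow le sle x y = (THE m. is_greatest_wrt le {w. sle w x \<and> le w y} m)"

text \<open>mixed upper envelope  x \<curlyvee> y = min wrt le {w. x \<preceq> w, y \<le> w}\<close>
definition mup :: "('a \<Rightarrow> 'a \<Rightarrow> bool) \<Rightarrow> ('a \<Rightarrow> 'a \<Rightarrow> bool) \<Rightarrow> 'a \<Rightarrow> 'a \<Rightarrow> 'a" where
  "mup le sle x y = (THE m. is_least_wrt le {w. sle x w \<and> le y w} m)"

definition mixed_lattice_vs :: "('a::real_vector \<Rightarrow> 'a \<Rightarrow> bool) \<Rightarrow> ('a \<Rightarrow> 'a \<Rightarrow> bool) \<Rightarrow> bool" where
  "mixed_lattice_vs le sle \<longleftrightarrow>
     partial_order_rel le \<and> partial_order_rel sle \<and>
     vs_compatible le \<and> vs_compatible sle \<and>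
     (\<forall>x y. \<exists>m. is_greatest_wrt le {w. sle w x \<and> le w y} m) \<and>
     (\<forall>x y. \<exists>m. is_least_wrt le {w. sle x w \<and> le y w} m)"

definition quasi_regular :: "('a::real_vector \<Rightarrow> 'a \<Rightarrow> bool) \<Rightarrow> ('a \<Rightarrow> 'a \<Rightarrow> bool) \<Rightarrow> bool" where
  "quasi_regular le sle \<longleftrightarrow>
     (\<forall>x y. sle 0 x \<longrightarrow> sle 0 y \<longrightarrow> sle 0 (mlow le sle x y) \<and> sle 0 (mup le sle x y))"

definition mixed_lattice_subspace ::
  "('a::real_vector \<Rightarrow> 'a \<Rightarrow> bool) \<Rightarrow> ('a \<Rightarrow> 'a \<Rightarrow> bool) \<Rightarrow> 'a set \<Rightarrow> bool" where
  "mixed_lattice_subspace le sle S \<longleftrightarrow> subspace S \<and>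
     (\<forall>x\<in>S. \<forall>y\<in>S. mlow le sle x y \<in> S \<and> mup le sle x y \<in> S)"

definition pos_part :: "('a::real_vector \<Rightarrow> 'a \<Rightarrow> bool) \<Rightarrow> 'a set \<Rightarrow> 'a set" where
  "pos_part r S = {x \<in> S. r 0 x}"

definition regular_subspace :: "('a::real_vector \<Rightarrow> 'a \<Rightarrow> bool) \<Rightarrow> 'a set \<Rightarrow> bool" where
  "regular_subspace sle S \<longleftrightarrow>
     S = {a - b | a b. a \<in> pos_part sle S \<and> b \<in> pos_part sle S}"

definition positively_generated :: "('a::real_vector \<Rightarrow> 'a \<Rightarrow> bool) \<Rightarrow> 'a set \<Rightarrow> bool" where
  "positively_generated le S \<longleftrightarrow>
     S = {a - b | a b. a \<in> pos_part le S \<and> b \<in> pos_part le S}"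

definition order_convex :: "('a \<Rightarrow> 'a \<Rightarrow> bool) \<Rightarrow> 'a set \<Rightarrow> bool" where
  "order_convex le U \<longleftrightarrow> (\<forall>x\<in>U. \<forall>y\<in>U. \<forall>z. le x z \<longrightarrow> le z y \<longrightarrow> z \<in> U)"

definition mixed_order_convex ::
  "('a::real_vector \<Rightarrow> 'a \<Rightarrow> bool) \<Rightarrow> ('a \<Rightarrow> 'a \<Rightarrow> bool) \<Rightarrow> 'a set \<Rightarrow> bool" where
  "mixed_order_convex le sle A \<longleftrightarrow> (\<forall>x y. y \<in> A \<longrightarrow> sle 0 x \<longrightarrow> le x y \<longrightarrow> x \<in> A)"

definition ml_ideal :: "('a::real_vector \<Rightarrow> 'a \<Rightarrow> bool) \<Rightarrow> ('a \<Rightarrow> 'a \<Rightarrow> bool) \<Rightarrow> 'a set \<Rightarrow> bool" where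
  "ml_ideal le sle S \<longleftrightarrow> order_convex le S \<and> mixed_lattice_subspace le sle S"

definition quasi_ideal :: "('a::real_vector \<Rightarrow> 'a \<Rightarrow> bool) \<Rightarrow> ('a \<Rightarrow> 'a \<Rightarrow> bool) \<Rightarrow> 'a set \<Rightarrow> bool" where
  "quasi_ideal le sle S \<longleftrightarrow> mixed_order_convex le sle S \<and> mixed_lattice_subspace le sle S"

definition set_sum :: "'a::plus set \<Rightarrow> 'a set \<Rightarrow> 'a set" where
  "set_sum A B = {a + b | a b. a \<in> A \<and> b \<in> B}"

end

theory Submission
  imports Defs
begin

text \<open>If \<open>0 \<preceq> x \<le> a + b\<close> with \<open>a \<in> A\<close>
  and \<open>b = b\<^sub>1 - b\<^sub>2\<close>, \<open>0 \<le> b\<^sub>i \<in> B\<close>, then \<open>x\<^sub>1 = 0 \<curlyvee> (x - b\<^sub>1)\<close> lies below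
  \<open>0 \<curlyvee> a \<in> A\<close>, hence in \<open>A\<close>, while \<open>0 \<le> x - x\<^sub>1 \<le> b\<^sub>1\<close> puts \<open>x - x\<^sub>1\<close> in \<open>B\<close>.
  Once \<open>A + B\<close> is mixed-order convex, closure under the envelopes follows because
  \<open>(x \<curlyvee> y) - x\<close> and \<open>x - (x \<curlywedge> y)\<close> are \<open>\<preceq>\<close>-positive and \<open>\<le>\<close>-below a \<open>\<preceq>\<close>-positive element
  of \<open>A + B\<close>. Finally, for \<open>0 \<le> z = a + b\<close> with \<open>a = a\<^sub>1 - a\<^sub>2\<close>, \<open>0 \<preceq> a\<^sub>i \<in> A\<close>, the splitting
  \<open>z = p + (z - p)\<close> with \<open>p = a\<^sub>1 \<curlywedge> z\<close> has \<open>0 \<le> p \<in> A\<close> and \<open>0 \<le> z - p \<le> b \<curlyvee> 0 \<in> B\<close>.\<close>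

lemma vs_compatible_iff_diff:
  assumes "vs_compatible r"
  shows "r x y \<longleftrightarrow> r 0 (y - x)"
proof
  assume "r x y"
  then have "r (x + - x) (y + - x)" using assms unfolding vs_compatible_def by blast
  then show "r 0 (y - x)" by simp
next
  assume "r 0 (y - x)"
  then have "r (0 + x) (y - x + x)" using assms unfolding vs_compatible_def by blast
  then show "r x y" by simp
qed

lemma vs_compatible_add_nonneg:
  assumes "partial_order_rel r" "vs_compatible r" "r 0 a" "r 0 b"
  shows "r 0 (a + b)"
proof -
  have "r (0 + b) (a + b)"
    using assms(2,3) unfolding vs_compatible_def by blast
  then show ?thesis
    using assms(1,4) unfolding partial_order_rel_def by fastforce
qed

lemma the_least_wrt:
  assumes "partial_order_rel r" "is_least_wrt r S m"
  shows "(THE m. is_least_wrt r S m) = m"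
  using assms unfolding partial_order_rel_def is_least_wrt_def by (intro the_equality) blast+

lemma the_greatest_wrt:
  assumes "partial_order_rel r" "is_greatest_wrt r S m"
  shows "(THE m. is_greatest_wrt r S m) = m"
  using assms unfolding partial_order_rel_def is_greatest_wrt_def by (intro the_equality) blast+

definition has_positive_majorants ::
  "('a::real_vector \<Rightarrow> 'a \<Rightarrow> bool) \<Rightarrow> ('a \<Rightarrow> 'a \<Rightarrow> bool) \<Rightarrow> 'a set \<Rightarrow> bool" where
  "has_positive_majorants le sle S \<longleftrightarrow> (\<forall>s\<in>S. \<exists>w\<in>S. sle 0 w \<and> le s w)"

locale mixed_lattice =
  fixes le sle :: "'a::real_vector \<Rightarrow> 'a \<Rightarrow> bool"
  assumes mixed_lattice_vs: "mixed_lattice_vs le sle"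
begin

lemma le_order: "partial_order_rel le" and sle_order: "partial_order_rel sle"
  and le_compatible: "vs_compatible le" and sle_compatible: "vs_compatible sle"
  using mixed_lattice_vs unfolding mixed_lattice_vs_def by blast+

lemma le_trans [trans]: "le x y \<Longrightarrow> le y z \<Longrightarrow> le x z"
  using le_order unfolding partial_order_rel_def by blast

lemma le_iff_diff: "le x y \<longleftrightarrow> le 0 (y - x)"
  using le_compatible by (rule vs_compatible_iff_diff)

lemma sle_iff_diff: "sle x y \<longleftrightarrow> sle 0 (y - x)"
  using sle_compatible by (rule vs_compatible_iff_diff)

lemma le_diff_iff_le_add: "le (x - y) z \<longleftrightarrow> le x (z + y)"
  using le_iff_diff[of "x - y" z] le_iff_diff[of x "z + y"] by (simp add: algebra_simps)

lemma le_diff_nonneg: "le 0 b \<Longrightarrow> le (x - b) x"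
  using le_iff_diff[of "x - b" x] by simp

lemma le_add_nonneg: "le 0 a \<Longrightarrow> le 0 b \<Longrightarrow> le 0 (a + b)"
  using le_order le_compatible by (rule vs_compatible_add_nonneg)

lemma sle_add_nonneg: "sle 0 a \<Longrightarrow> sle 0 b \<Longrightarrow> sle 0 (a + b)"
  using sle_order sle_compatible by (rule vs_compatible_add_nonneg)

lemma mup_characterization:
  "sle x (mup le sle x y) \<and> le y (mup le sle x y) \<and>
   (\<forall>w. sle x w \<longrightarrow> le y w \<longrightarrow> le (mup le sle x y) w)"
proof -
  obtain m where "is_least_wrt le {w. sle x w \<and> le y w} m"
    using mixed_lattice_vs unfolding mixed_lattice_vs_def by blast
  moreover from this have "mup le sle x y = m"
    unfolding mup_def by (rule the_least_wrt[OF le_order])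
  ultimately show ?thesis unfolding is_least_wrt_def by blast
qed

lemma mlow_characterization:
  "sle (mlow le sle x y) x \<and> le (mlow le sle x y) y \<and>
   (\<forall>w. sle w x \<longrightarrow> le w y \<longrightarrow> le w (mlow le sle x y))"
proof -
  obtain m where "is_greatest_wrt le {w. sle w x \<and> le w y} m"
    using mixed_lattice_vs unfolding mixed_lattice_vs_def by blast
  moreover from this have "mlow le sle x y = m"
    unfolding mlow_def by (rule the_greatest_wrt[OF le_order])
  ultimately show ?thesis unfolding is_greatest_wrt_def by blast
qed

lemma mup_sle: "sle x (mup le sle x y)"
  and mup_le: "le y (mup le sle x y)"
  and mup_least: "sle x w \<Longrightarrow> le y w \<Longrightarrow> le (mup le sle x y) w"
  using mup_characterization by blast+

lemma mlow_sle: "sle (mlow le sle x y) x"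
  and mlow_le: "le (mlow le sle x y) y"
  and mlow_greatest: "sle w x \<Longrightarrow> le w y \<Longrightarrow> le w (mlow le sle x y)"
  using mlow_characterization by blast+

lemma mixed_order_convex_set_sum:
  assumes A: "quasi_ideal le sle A"
    and B: "subspace B" "positively_generated le B" "order_convex le B"
  shows "mixed_order_convex le sle (set_sum A B)"
  unfolding mixed_order_convex_def
proof (intro allI impI)
  fix x y
  assume "y \<in> set_sum A B" and x_pos: "sle 0 x" and "le x y"
  then obtain a b where y: "y = a + b" "a \<in> A" "b \<in> B" unfolding set_sum_def by blast
  then obtain b1 b2 where b: "b = b1 - b2" "b1 \<in> B" "le 0 b1" "le 0 b2"
    using B(2) unfolding positively_generated_def pos_part_def by blast
  define a' where "a' = mup le sle 0 a"
  define x1 where "x1 = mup le sle 0 (x - b1)"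
  have "a' \<in> A"
    using A real_vector.subspace_0 y(2)
    unfolding a'_def quasi_ideal_def mixed_lattice_subspace_def by blast
  have x1_pos: "sle 0 x1" and x1_above: "le (x - b1) x1"
    and x1_least: "\<And>w. sle 0 w \<Longrightarrow> le (x - b1) w \<Longrightarrow> le x1 w"
    unfolding x1_def by (rule mup_sle, rule mup_le, rule mup_least)
  have "le (x - b1) (y - b1)"
    using \<open>le x y\<close> le_iff_diff[of x y] le_iff_diff[of "x - b1" "y - b1"] by simp
  also have "y - b1 = a - b2"
    using y b by simp
  also have "le \<dots> a"
    using b(4) by (rule le_diff_nonneg)
  also have "le a a'"
    unfolding a'_def by (rule mup_le)
  finally have "le x1 a'"
    using x1_least mup_sle unfolding a'_def by blast
  then have "x1 \<in> A"
    using A \<open>a' \<in> A\<close> x1_pos unfolding quasi_ideal_def mixed_order_convex_def by blast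
  have "le x1 x"
    using x_pos b(3) le_diff_nonneg x1_least by blast
  moreover have "le (x - x1) b1"
    using x1_above le_iff_diff[of "x - b1" x1] le_iff_diff[of "x - x1" b1]
    by (simp add: algebra_simps)
  ultimately have "x - x1 \<in> B"
    using B(1,3) b(2) real_vector.subspace_0 le_iff_diff unfolding order_convex_def by blast
  then show "x \<in> set_sum A B"
    using \<open>x1 \<in> A\<close> unfolding set_sum_def by force
qed

lemma has_positive_majorants_if_mixed_lattice_subspace:
  assumes "mixed_lattice_subspace le sle S"
  shows "has_positive_majorants le sle S"
  unfolding has_positive_majorants_def
proof
  fix s assume "s \<in> S"
  then have "mup le sle 0 s \<in> S"
    using assms real_vector.subspace_0 unfolding mixed_lattice_subspace_def by blast
  then show "\<exists>w\<in>S. sle 0 w \<and> le s w"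
    using mup_sle mup_le by blast
qed

lemma has_positive_majorants_set_sum:
  assumes "has_positive_majorants le sle A" "has_positive_majorants le sle B"
  shows "has_positive_majorants le sle (set_sum A B)"
  unfolding has_positive_majorants_def
proof
  fix s assume "s \<in> set_sum A B"
  then obtain a b where s: "s = a + b" "a \<in> A" "b \<in> B" unfolding set_sum_def by blast
  then obtain wa wb where w: "wa \<in> A" "sle 0 wa" "le a wa" "wb \<in> B" "sle 0 wb" "le b wb"
    using assms unfolding has_positive_majorants_def by meson
  have "le 0 ((wa - a) + (wb - b))"
    using w le_iff_diff le_add_nonneg by blast
  then have "le s (wa + wb)"
    using s le_iff_diff by (simp add: algebra_simps)
  moreover have "wa + wb \<in> set_sum A B"
    using w unfolding set_sum_def by blast
  ultimately show "\<exists>w\<in>set_sum A B. sle 0 w \<and> le s w"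
    using w sle_add_nonneg by blast
qed

lemma mixed_lattice_subspace_if_positive_majorants:
  assumes S: "subspace S" "mixed_order_convex le sle S" "has_positive_majorants le sle S"
  shows "mixed_lattice_subspace le sle S"
  unfolding mixed_lattice_subspace_def
proof (intro conjI ballI)
  show "subspace S" by (rule S(1))
next
  fix x y assume xy: "x \<in> S" "y \<in> S"
  have convex: "v \<in> S" if "sle 0 v" "le v w" "w \<in> S" for v w
    using S(2) that unfolding mixed_order_convex_def by blast
  have majorant: "\<exists>w\<in>S. sle 0 w \<and> le s w" if "s \<in> S" for s
    using S(3) that unfolding has_positive_majorants_def by blast
  obtain w where w: "w \<in> S" "sle 0 w" "le (y - x) w"
    using majorant S(1) xy real_vector.subspace_diff by blast
  define m where "m = mup le sle x y"
  have "sle x (x + w)"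
    using w(2) sle_iff_diff[of x "x + w"] by simp
  moreover have "le y (x + w)"
    using w(3) le_iff_diff[of y "x + w"] le_iff_diff[of "y - x" w] by (simp add: algebra_simps)
  ultimately have "le (m - x) w"
    unfolding m_def using mup_least le_diff_iff_le_add by (simp add: add.commute)
  moreover have "sle 0 (m - x)"
    unfolding m_def using mup_sle sle_iff_diff by blast
  ultimately have "m - x \<in> S"
    using w(1) convex by blast
  then show "mup le sle x y \<in> S"
    unfolding m_def using S(1) xy real_vector.subspace_add by fastforce
  obtain w' where w': "w' \<in> S" "sle 0 w'" "le (x - y) w'"
    using majorant S(1) xy real_vector.subspace_diff by blast
  define l where "l = mlow le sle x y"
  have "sle (x - w') x"
    using w'(2) sle_iff_diff[of "x - w'" x] by simp
  moreover have "le (x - w') y"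
    using w'(3) le_iff_diff[of "x - w'" y] le_iff_diff[of "x - y" w'] by (simp add: algebra_simps)
  ultimately have "le (x - w') l"
    unfolding l_def by (rule mlow_greatest)
  then have "le (x - l) w'"
    using le_iff_diff[of "x - w'" l] le_iff_diff[of "x - l" w'] by (simp add: algebra_simps)
  moreover have "sle 0 (x - l)"
    unfolding l_def using mlow_sle sle_iff_diff by blast
  ultimately have "x - l \<in> S"
    using w'(1) convex by blast
  then show "mlow le sle x y \<in> S"
    unfolding l_def using S(1) xy real_vector.subspace_diff by fastforce
qed

lemma pos_part_set_sum:
  assumes A: "quasi_ideal le sle A" "regular_subspace sle A"
    and B: "ml_ideal le sle B"
  shows "pos_part le (set_sum A B) = set_sum (pos_part le A) (pos_part le B)"
proof
  show "set_sum (pos_part le A) (pos_part le B) \<subseteq> pos_part le (set_sum A B)"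
    unfolding set_sum_def pos_part_def using le_add_nonneg by blast
next
  have A_sub: "subspace A" and A_conv: "mixed_order_convex le sle A"
    using A(1) unfolding quasi_ideal_def mixed_lattice_subspace_def by blast+
  have B_sub: "subspace B" and B_conv: "order_convex le B"
    and B_mup: "\<And>x y. x \<in> B \<Longrightarrow> y \<in> B \<Longrightarrow> mup le sle x y \<in> B"
    using B unfolding ml_ideal_def mixed_lattice_subspace_def by blast+
  show "pos_part le (set_sum A B) \<subseteq> set_sum (pos_part le A) (pos_part le B)"
  proof
    fix z assume "z \<in> pos_part le (set_sum A B)"
    then obtain a b where z: "z = a + b" "a \<in> A" "b \<in> B" "le 0 z"
      unfolding pos_part_def set_sum_def by blast
    then obtain a1 a2 where a: "a = a1 - a2" "a1 \<in> A" "sle 0 a1" "sle 0 a2"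
      using A(2) unfolding regular_subspace_def pos_part_def by blast
    define b' where "b' = mup le sle b 0"
    define p where "p = mlow le sle a1 z"
    have "b' \<in> B"
      using B_mup B_sub z(3) real_vector.subspace_0 unfolding b'_def by blast
    have p_nonneg: "le 0 p"
      unfolding p_def using a(3) z(4) mlow_greatest by blast
    have "le (a1 - p) a1"
      using p_nonneg by (rule le_diff_nonneg)
    then have "a1 - p \<in> A"
      using A_conv a(2) mlow_sle sle_iff_diff unfolding p_def mixed_order_convex_def by blast
    then have "p \<in> A"
      using A_sub a(2) real_vector.subspace_diff by fastforce
    have "sle 0 (a2 + (b' - b))"
      using a(4) mup_sle sle_iff_diff sle_add_nonneg unfolding b'_def by blast
    moreover have "a2 + (b' - b) = a1 - (z - b')"
      using z a by (simp add: algebra_simps)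
    ultimately have "sle (z - b') a1"
      using sle_iff_diff by simp
    then have "le (z - b') p"
      unfolding p_def using le_diff_nonneg mup_le mlow_greatest unfolding b'_def by blast
    then have "le (z - p) b'"
      using le_iff_diff[of "z - b'" p] le_iff_diff[of "z - p" b'] by (simp add: algebra_simps)
    moreover have "le 0 (z - p)"
      using mlow_le le_iff_diff unfolding p_def by blast
    ultimately have "z - p \<in> B"
      using B_conv B_sub \<open>b' \<in> B\<close> real_vector.subspace_0 unfolding order_convex_def by blast
    then show "z \<in> set_sum (pos_part le A) (pos_part le B)"
      using \<open>p \<in> A\<close> p_nonneg \<open>le 0 (z - p)\<close> unfolding set_sum_def pos_part_def by force
  qed
qed

end

theorem theorem4p16:
  fixes le sle :: "'a::real_vector \<Rightarrow> 'a \<Rightarrow> bool"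
    and A B :: "'a set"
  assumes V: "mixed_lattice_vs le sle"
    and qr: "quasi_regular le sle"
    and A: "quasi_ideal le sle A"
    and B_sub: "subspace B"
    and B_pg: "positively_generated le B"
    and B_conv: "order_convex le B"
  shows "(subspace (set_sum A B) \<and> mixed_order_convex le sle (set_sum A B)) \<and>
         (ml_ideal le sle B \<longrightarrow> quasi_ideal le sle (set_sum A B)) \<and>
         (ml_ideal le sle B \<longrightarrow> regular_subspace sle A \<longrightarrow>
           pos_part le (set_sum A B) = set_sum (pos_part le A) (pos_part le B))"
proof -
  interpret mixed_lattice le sle by (rule mixed_lattice.intro[OF V])
  have A_sub: "subspace A" and A_lattice: "mixed_lattice_subspace le sle A"
    using A unfolding quasi_ideal_def mixed_lattice_subspace_def by blast+
  have sum_sub: "subspace (set_sum A B)"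
    unfolding set_sum_def using A_sub B_sub by (rule real_vector.subspace_sums)
  have sum_conv: "mixed_order_convex le sle (set_sum A B)"
    using A B_sub B_pg B_conv by (rule mixed_order_convex_set_sum)
  have "quasi_ideal le sle (set_sum A B)" if "ml_ideal le sle B"
  proof -
    have "has_positive_majorants le sle (set_sum A B)"
      using A_lattice that has_positive_majorants_set_sum
        has_positive_majorants_if_mixed_lattice_subspace
      unfolding ml_ideal_def by blast
    then show ?thesis
      using sum_sub sum_conv mixed_lattice_subspace_if_positive_majorants
      unfolding quasi_ideal_def by blast
  qed
  then show ?thesis
    using sum_sub sum_conv A pos_part_set_sum by blast
qed

end
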